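(* Assume (V1), (V2), (V3), and (In), and let $\delta>0$. Then for every $n$ and all $t,s\ge\delta$, $$\int_0^L|\check\rho^n(t,z)-\check\rho^n(s,z)|\,dz\le R^2\big[C_\delta+(v_{\max}-v(R))\big]|t-s|,$$ where $C_\delta:=3(v_{\max}-v(R))+2(\bar x_{\max}-\bar x_{\min})/\delta$.
   Context: (V1): $v\in C^1([0,\infty))$ strictly decreasing; (V2): $v(0)=v_{\max}\in\mathbb{R}$; (V3): $\rho\mapsto\rho\,v'(\rho)$ is non-increasing on $[0,\infty)$. $\mathcal{M}_L$: nonnegative compactly supported Radon measures on $\mathbb{R}$ of mass $L>0$. (In): $\bar\rho\in\mathcal{M}_L\cap L^\infty(\mathbb{R})$; $R:=\|\bar\rho\|_{L^\infty}$; $[\bar x_{\min},\bar x_{\max}]$ smallest closed interval containing $\mathrm{supp}\,\bar\rho$. For $n\in\mathbb{N}$: $N_n=2^n$, $\ell_n=2^{-n}L$, $\bar x^n_0=\bar x_{\min}$, $\bar x^n_i=\sup\{x:\int_{\bar x^n_{i-1}}^x\bar\rho<\ell_n\}$; $(x^n_i(t))$ solves $\dot x^n_{N_n}=v_{\max}$, $\dot x^n_i=v(\ell_n/(x^n_{i+1}-x^n_i))$, $x^n_i(0)=\bar x^n_i$; $y^n_i:=\ell_n/(x^n_{i+1}-x^n_i)$; $\check\rho^n(t,z):=\sum_{i=0}^{N_n-1}y^n_i(t)\chi_{[i\ell_n,(i+1)\ell_n)}(z)$, $z\in[0,L]$. *)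

theory Defs
  imports "HOL-Analysis.Analysis" "HOL-Probability.Essential_Supremum"
begin

definition msupp :: "(real \<Rightarrow> real) \<Rightarrow> real set" where
  "msupp rho = {x. \<forall>e>0. (LINT y:{x-e..x+e}|lborel. rho y) > 0}"

definition Linf_norm :: "(real \<Rightarrow> real) \<Rightarrow> real" where
  "Linf_norm rho = real_of_ereal (esssup lborel (\<lambda>x. ereal \<bar>rho x\<bar>))"

definition xbar_min :: "(real \<Rightarrow> real) \<Rightarrow> real" where
  "xbar_min rho = Inf (msupp rho)"

definition xbar_max :: "(real \<Rightarrow> real) \<Rightarrow> real" where
  "xbar_max rho = Sup (msupp rho)"

text \<open>Number of particles N_n = 2^n and mass per particle l_n = 2^(-n) L.\<close>
definition Nn :: "nat \<Rightarrow> nat" where "Nn n = 2 ^ n"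
definition elln :: "real \<Rightarrow> nat \<Rightarrow> real" where "elln L n = L / 2 ^ n"

fun xbar :: "(real \<Rightarrow> real) \<Rightarrow> real \<Rightarrow> nat \<Rightarrow> nat \<Rightarrow> real" where
  "xbar rho L n 0 = xbar_min rho"
| "xbar rho L n (Suc i) =
     Sup {x. (LINT y:{xbar rho L n i..x}|lborel. rho y) < elln L n}"

text \<open>(x_i)_{i=0..N_n} is a (global, forward-in-time) solution of the
  follow-the-leader system with the given initial data; solutions keep
  the particles strictly ordered so that the densities y_i are defined.\<close>
definition ftl_solution ::
  "(real \<Rightarrow> real) \<Rightarrow> (real \<Rightarrow> real) \<Rightarrow> real \<Rightarrow> nat \<Rightarrow> (nat \<Rightarrow> real \<Rightarrow> real) \<Rightarrow> bool" where
  "ftl_solution v rho L n x \<longleftrightarrow>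
     (\<forall>i\<le>Nn n. x i 0 = xbar rho L n i) \<and>
     (\<forall>t\<ge>0. \<forall>i<Nn n. x i t < x (Suc i) t) \<and>
     (\<forall>t\<ge>0. (x (Nn n) has_real_derivative v 0) (at t within {0..})) \<and>
     (\<forall>t\<ge>0. \<forall>i<Nn n.
        (x i has_real_derivative v (elln L n / (x (Suc i) t - x i t))) (at t within {0..}))"

definition ydens :: "real \<Rightarrow> nat \<Rightarrow> (nat \<Rightarrow> real \<Rightarrow> real) \<Rightarrow> nat \<Rightarrow> real \<Rightarrow> real" where
  "ydens L n x i t = elln L n / (x (Suc i) t - x i t)"

definition rho_check :: "real \<Rightarrow> nat \<Rightarrow> (nat \<Rightarrow> real \<Rightarrow> real) \<Rightarrow> real \<Rightarrow> real \<Rightarrow> real" where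
  "rho_check L n x t z =
     (\<Sum>i<Nn n. ydens L n x i t *
        indicator {real i * elln L n ..< real (Suc i) * elln L n} z)"

end

theory Submission
  imports Defs
begin

text \<open>
  In Lagrangian coordinates the approximate density is the step function with values
  y_i = l_n / (x_(i+1) - x_i) on intervals of length l_n, so its L1 distance at times t and s
  is the sum of l_n |y_i(t) - y_i(s)|, and it suffices to bound the sum of
  l_n |y_i'| = y_i^2 |x_(i+1)' - x_i'|.  Three maximum-principle arguments for the
  follow-the-leader system supply the bounds: the smallest gap stays above l_n / R, which
  bounds every initial gap since rho <= R, so y_i <= R; the length x_N - x_0 grows at rate at
  most v_max - v(R); and, by (V3), the relative gap velocity obeys the Oleinik-type bound
  (x_(i+1)' - x_i') / (x_(i+1) - x_i) <= 1/t.  As the gap velocities telescope to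
  v_max - v(y_0) >= 0, their total variation is at most twice their positive part, hence at most
  2 (x_N - x_0) / t + 2 (v_max - v(R)); finally x_0(0) and x_N(0) lie in
  [xbar_min, xbar_max] because the initial positions split the mass of rho into equal parts.
\<close>

section \<open>A one-sided maximum principle\<close>

lemma closed_right_induct:
  fixes S :: "real set"
  assumes "closed S" and "a \<in> S" and "a \<le> b"
    and step: "\<And>\<tau>. \<tau> \<in> S \<Longrightarrow> a \<le> \<tau> \<Longrightarrow> \<tau> < b \<Longrightarrow> \<forall>\<^sub>F t in at_right \<tau>. t \<in> S"
  shows "b \<in> S"
proof -
  let ?S = "S \<inter> {a..b}"
  have bdd: "bdd_above ?S" by (auto intro: bdd_aboveI)
  define \<tau> where "\<tau> = Sup ?S"
  have "\<tau> \<in> ?S" unfolding \<tau>_def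
    using assms by (intro closed_contains_Sup bdd) (auto intro: closed_Int)
  moreover have "\<not> \<tau> < b"
  proof
    assume "\<tau> < b"
    with \<open>\<tau> \<in> ?S\<close> have "\<forall>\<^sub>F t in at_right \<tau>. t \<in> S \<and> \<tau> < t \<and> t < b"
      using step eventually_at_right_less[of \<tau>] eventually_at_right_field
      by (auto intro!: eventually_conj)
    then obtain t where "t \<in> S" "\<tau> < t" "t < b"
      using eventually_happens'[OF trivial_limit_at_right_real] by blast
    moreover have "t \<le> \<tau>" unfolding \<tau>_def
      using \<open>\<tau> \<in> ?S\<close> calculation by (intro cSup_upper bdd) auto
    ultimately show False by simp
  qed
  ultimately show ?thesis by auto
qed

lemma eventually_nonpos_at_right:
  fixes g :: "real \<Rightarrow> real"
  assumes deriv: "(g has_real_derivative D) (at \<tau> within {a..})" and "a \<le> \<tau>"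
    and "g \<tau> \<le> 0" and neg: "g \<tau> = 0 \<Longrightarrow> D < 0"
  shows "\<forall>\<^sub>F t in at_right \<tau>. g t \<le> 0"
proof (cases "g \<tau> < 0")
  case True
  have "at_right \<tau> \<le> at \<tau> within {a..}"
    using \<open>a \<le> \<tau>\<close> by (intro at_le) auto
  moreover have "\<forall>\<^sub>F t in at \<tau> within {a..}. g t < 0"
    using DERIV_continuous[OF deriv] True by (intro order_tendstoD) (simp_all add: continuous_within)
  ultimately have "\<forall>\<^sub>F t in at_right \<tau>. g t < 0" by (rule filter_leD)
  then show ?thesis by (auto elim: eventually_mono)
next
  case False
  with \<open>g \<tau> \<le> 0\<close> have g0: "g \<tau> = 0" by simp
  from has_real_derivative_neg_dec_right[OF deriv neg[OF g0]]
  obtain d where "d > 0" and "\<And>h. h > 0 \<Longrightarrow> \<tau> + h \<in> {a..} \<Longrightarrow> h < d \<Longrightarrow> g (\<tau> + h) < g \<tau>"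
    by force
  then show ?thesis
    unfolding eventually_at_right_field using g0 \<open>a \<le> \<tau>\<close>
    by (intro exI[of _ "\<tau> + d"]) (force dest: spec[of _ "_ - \<tau>"])
qed

lemma continuous_on_Icc_if_deriv_within:
  fixes g D :: "real \<Rightarrow> real"
  assumes "\<And>t. a \<le> t \<Longrightarrow> t \<le> b \<Longrightarrow> (g has_real_derivative D t) (at t within {a..})"
  shows "continuous_on {a..b} g"
  unfolding continuous_on_eq_continuous_within
proof
  fix t assume "t \<in> {a..b}"
  then have "continuous (at t within {a..}) g"
    using assms by (auto intro: DERIV_continuous)
  then show "continuous (at t within {a..b}) g"
    by (rule continuous_within_subset) auto
qed

lemma max_principle:
  fixes f D :: "'i \<Rightarrow> real \<Rightarrow> real"
  assumes "finite I" and "a \<le> b"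
    and deriv: "\<And>i t. i \<in> I \<Longrightarrow> a \<le> t \<Longrightarrow> t \<le> b \<Longrightarrow>
                  (f i has_real_derivative D i t) (at t within {a..})"
    and at_max: "\<And>i t. i \<in> I \<Longrightarrow> a \<le> t \<Longrightarrow> t < b \<Longrightarrow> \<forall>j\<in>I. f j t \<le> f i t \<Longrightarrow>
                  c \<le> f i t \<Longrightarrow> D i t \<le> 0"
    and init: "\<And>i. i \<in> I \<Longrightarrow> f i a \<le> c"
    and "i \<in> I"
  shows "f i b \<le> c"
proof (rule field_le_epsilon)
  fix e :: real assume "e > 0"
  define \<epsilon> where "\<epsilon> = e / (b - a + 1)"
  have "\<epsilon> > 0" and \<epsilon>_le: "\<epsilon> * (b - a) \<le> e"
    using \<open>e > 0\<close> \<open>a \<le> b\<close> by (auto simp: \<epsilon>_def field_simps)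
  \<comment> \<open>The tilt by \<open>\<epsilon> * (t - a)\<close> makes the derivative strictly negative at a touching point.\<close>
  define g where "g j t = f j t - c - \<epsilon> * (t - a)" for j t
  define S where "S = {t. \<forall>j\<in>I. g j t \<le> 0} \<inter> {a..b}"
  have g_deriv: "(g j has_real_derivative D j t - \<epsilon>) (at t within {a..})"
    if "j \<in> I" "a \<le> t" "t \<le> b" for j t
    unfolding g_def using deriv[OF that] by (auto intro!: derivative_eq_intros)
  have "closed ({a..b} \<inter> g j -` {..0})" if "j \<in> I" for j
    using continuous_closed_preimage[OF continuous_on_Icc_if_deriv_within[OF g_deriv[OF that]]]
    by simp
  moreover have "S = {a..b} \<inter> (\<Inter>j\<in>I. {a..b} \<inter> g j -` {..0})"
    by (auto simp: S_def)
  ultimately have "closed S" by (metis closed_INT closed_Int closed_atLeastAtMost)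
  have "b \<in> S"
  proof (rule closed_right_induct[OF \<open>closed S\<close> _ \<open>a \<le> b\<close>])
    show "a \<in> S" using init \<open>a \<le> b\<close> by (simp add: S_def g_def)
  next
    fix \<tau> assume "\<tau> \<in> S" "a \<le> \<tau>" "\<tau> < b"
    then have g_le: "\<forall>j\<in>I. g j \<tau> \<le> 0" by (simp add: S_def)
    have "\<forall>\<^sub>F t in at_right \<tau>. g j t \<le> 0" if "j \<in> I" for j
    proof (rule eventually_nonpos_at_right[OF g_deriv[OF that] \<open>a \<le> \<tau>\<close>])
      show "g j \<tau> \<le> 0" using g_le that by blast
      assume "g j \<tau> = 0"
      moreover have "0 \<le> \<epsilon> * (\<tau> - a)" using \<open>\<epsilon> > 0\<close> \<open>a \<le> \<tau>\<close> by simp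
      ultimately have "\<forall>k\<in>I. f k \<tau> \<le> f j \<tau>" and "c \<le> f j \<tau>"
        using g_le by (auto simp: g_def)
      then show "D j \<tau> - \<epsilon> < 0" using at_max[OF that \<open>a \<le> \<tau>\<close> \<open>\<tau> < b\<close>] \<open>\<epsilon> > 0\<close> by simp
    qed (use \<open>a \<le> \<tau>\<close> \<open>\<tau> < b\<close> in auto)
    then have "\<forall>\<^sub>F t in at_right \<tau>. \<forall>j\<in>I. g j t \<le> 0"
      using \<open>finite I\<close> by (simp add: eventually_ball_finite)
    moreover have "\<forall>\<^sub>F t in at_right \<tau>. t \<in> {a..b}"
      using \<open>a \<le> \<tau>\<close> \<open>\<tau> < b\<close> unfolding eventually_at_right_field by force
    ultimately show "\<forall>\<^sub>F t in at_right \<tau>. t \<in> S"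
      unfolding S_def by eventually_elim simp
  qed
  then show "f i b \<le> c + e"
    using \<open>i \<in> I\<close> \<epsilon>_le by (auto simp: S_def g_def)
qed

corollary deriv_within_nonpos_imp_antimono:
  fixes f D :: "real \<Rightarrow> real"
  assumes "a \<le> b"
    and "\<And>t. a \<le> t \<Longrightarrow> t \<le> b \<Longrightarrow> (f has_real_derivative D t) (at t within {a..})"
    and "\<And>t. a \<le> t \<Longrightarrow> t < b \<Longrightarrow> D t \<le> 0"
  shows "f b \<le> f a"
  using max_principle[of "{()}" a b "\<lambda>_. f" "\<lambda>_. D" "f a" "()"] assms by auto

section \<open>The initial density and the initial positions\<close>

lemma continuous_Sup_level:
  fixes G :: "real \<Rightarrow> real"
  assumes cont: "continuous_on UNIV G" and "G a \<le> c" and "a \<le> b"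
    and below: "\<And>x. G x < c \<Longrightarrow> x \<le> b"
  defines "s \<equiv> Sup {x. x < a \<or> G x < c}"
  shows "a \<le> s" and "s \<le> b" and "G s = c"
proof -
  let ?S = "{x. x < a \<or> G x < c}"
  have "a - 1 \<in> ?S" by simp
  have S_le: "x \<le> b" if "x \<in> ?S" for x using that below \<open>a \<le> b\<close> by force
  then have bdd: "bdd_above ?S" by (rule bdd_aboveI)
  show "a \<le> s" unfolding s_def
    by (rule dense_le) (auto intro: cSup_upper bdd)
  then show "s \<le> b" unfolding s_def using \<open>a - 1 \<in> ?S\<close> S_le by (intro cSup_least) blast+
  have not_above: "x \<notin> ?S" if "s < x" for x
  proof
    assume "x \<in> ?S"
    then have "x \<le> s" unfolding s_def using bdd by (rule cSup_upper)
    with \<open>s < x\<close> show False by simp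
  qed
  show "G s = c"
  proof (rule antisym)
    have "s \<in> closure ?S"
      unfolding s_def using \<open>a - 1 \<in> ?S\<close> bdd by (intro closure_contains_Sup) blast+
    moreover have "closure ?S \<subseteq> {..a} \<union> {x. G x \<le> c}"
      using closed_Collect_le[OF cont continuous_on_const]
      by (intro closure_minimal closed_Un) auto
    ultimately show "G s \<le> c" using \<open>a \<le> s\<close> \<open>G a \<le> c\<close> by (cases "s = a") auto
    show "c \<le> G s"
    proof (rule ccontr)
      assume "\<not> c \<le> G s"
      moreover have "isCont G s" using cont by (simp add: continuous_on_eq_continuous_at)
      ultimately have "\<forall>\<^sub>F x in at s. G x < c"
        by (intro order_tendstoD(2)[OF \<open>isCont G s\<close>[unfolded isCont_def]]) simp
      then have "\<forall>\<^sub>F x in at_right s. G x < c"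
        by (rule filter_leD[OF at_le, rotated]) simp
      then obtain x where "s < x" "G x < c"
        using eventually_conj[OF _ eventually_at_right_less[of s]]
          eventually_happens'[OF trivial_limit_at_right_real] by blast
      then show False using not_above by blast
    qed
  qed
qed

locale initial_density =
  fixes rho :: "real \<Rightarrow> real" and L :: real
  assumes L_pos: "L > 0"
    and rho_nonneg: "\<And>y. rho y \<ge> 0"
    and rho_int: "integrable lborel rho"
    and rho_mass: "(LINT y|lborel. rho y) = L"
    and rho_Linf: "esssup lborel (\<lambda>y. ereal \<bar>rho y\<bar>) < \<infinity>"
    and rho_cpt: "bounded (msupp rho)"
begin

abbreviation "R \<equiv> Linf_norm rho"

definition cdf :: "real \<Rightarrow> real" where
  "cdf x = (LINT y:{..x}|lborel. rho y)"

lemma esssup_eq_R: "esssup lborel (\<lambda>y. ereal \<bar>rho y\<bar>) = ereal R"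
  and R_nonneg: "0 \<le> R"
proof -
  let ?E = "esssup lborel (\<lambda>y. ereal \<bar>rho y\<bar>)"
  have "0 = esssup (lborel :: real measure) (\<lambda>_. 0)" by (simp add: esssup_const)
  also have "\<dots> \<le> esssup lborel (\<lambda>y. ereal \<bar>rho y\<bar>)" by (intro esssup_mono) auto
  finally have "0 \<le> ?E" .
  with rho_Linf show "?E = ereal R" and "0 \<le> R"
    unfolding Linf_norm_def by (cases ?E; simp)+
qed

lemma AE_rho_le_R: "AE y in lborel. rho y \<le> R"
  using esssup_AE[of "\<lambda>y. ereal \<bar>rho y\<bar>" lborel] unfolding esssup_eq_R
  by eventually_elim auto

lemma set_integrable_rho: "A \<in> sets borel \<Longrightarrow> set_integrable lborel A rho"
  unfolding set_integrable_def by (rule integrable_mult_indicator) (auto simp: rho_int)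

lemma set_integral_rho_nonneg: "0 \<le> (LINT y:A|lborel. rho y)"
  unfolding set_lebesgue_integral_def by (intro integral_nonneg_AE) (auto simp: rho_nonneg)

lemma set_integral_Icc_eq_cdf_diff:
  assumes "a \<le> b" shows "(LINT y:{a..b}|lborel. rho y) = cdf b - cdf a"
proof -
  have "{..b} = {..<a} \<union> {a..b}" using assms by auto
  then have "cdf b = (LINT y:{..<a}|lborel. rho y) + (LINT y:{a..b}|lborel. rho y)"
    unfolding cdf_def by (simp only:) (rule set_integral_Un, auto intro: set_integrable_rho)
  moreover have "(LINT y:{..<a}|lborel. rho y) = cdf a"
    unfolding cdf_def
  proof (rule set_integral_null_delta)
    have "({..<a} - {..a}) \<union> ({..a} - {..<a}) = {a}" by auto
    then show "({..<a} - {..a}) \<union> ({..a} - {..<a}) \<in> null_sets lborel"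
      by (simp add: countable_imp_null_set_lborel)
  qed (auto simp: rho_int)
  ultimately show ?thesis by simp
qed

lemma set_integral_Icc_le_R:
  assumes "a \<le> b" shows "(LINT y:{a..b}|lborel. rho y) \<le> R * (b - a)"
proof -
  have "(LINT y:{a..b}|lborel. rho y) \<le> (LINT y:{a..b}|lborel. R)"
  proof (rule set_integral_mono_AE)
    show "set_integrable lborel {a..b} rho" by (rule set_integrable_rho) simp
    show "set_integrable lborel {a..b} (\<lambda>_. R)"
      unfolding set_integrable_def
      using integrable_mult_left[OF integrable_indicator[of "{a..b}" lborel], of R]
      by (simp add: mult.commute emeasure_lborel_Icc_eq)
    show "AE x\<in>{a..b} in lborel. rho x \<le> R" using AE_rho_le_R by eventually_elim auto
  qed
  also have "\<dots> = R * (b - a)" using assms by (simp add: set_integral_const)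
  finally show ?thesis .
qed

lemma cdf_mono: "a \<le> b \<Longrightarrow> cdf a \<le> cdf b"
  using set_integral_Icc_eq_cdf_diff[of a b] set_integral_rho_nonneg[of "{a..b}"] by simp

lemma cdf_diff_le: "a \<le> b \<Longrightarrow> cdf b - cdf a \<le> R * (b - a)"
  using set_integral_Icc_eq_cdf_diff[of a b] set_integral_Icc_le_R[of a b] by simp

lemma continuous_cdf: "continuous_on UNIV cdf"
proof (rule lipschitz_on_continuous_on)
  show "R-lipschitz_on UNIV cdf"
  proof (rule lipschitz_onI)
    fix x y :: real
    show "dist (cdf x) (cdf y) \<le> R * dist x y"
      using cdf_mono[of x y] cdf_diff_le[of x y] cdf_mono[of y x] cdf_diff_le[of y x]
      by (cases "x \<le> y") (auto simp: dist_real_def)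
  qed (rule R_nonneg)
qed

lemma cdf_add_tail: "cdf x + (LINT y:{x<..}|lborel. rho y) = L"
proof -
  have "{..x} \<union> {x<..} = UNIV" by auto
  then have "L = (LINT y:({..x} \<union> {x<..})|lborel. rho y)"
    using rho_mass by (simp add: set_lebesgue_integral_def)
  also have "\<dots> = cdf x + (LINT y:{x<..}|lborel. rho y)"
    unfolding cdf_def by (rule set_integral_Un) (auto intro: set_integrable_rho)
  finally show ?thesis by simp
qed

lemma cdf_le_mass: "cdf x \<le> L"
  using cdf_add_tail[of x] set_integral_rho_nonneg[of "{x<..}"] by simp

lemma cdf_nonneg: "0 \<le> cdf x"
  unfolding cdf_def by (rule set_integral_rho_nonneg)

lemma cdf_at_top: "(\<lambda>k::nat. cdf (real k)) \<longlonglongrightarrow> L"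
proof -
  have "(\<lambda>k::nat. LINT y:{..real k}|lborel. rho y) \<longlonglongrightarrow> (LINT y:(\<Union>k. {..real k})|lborel. rho y)"
    by (rule set_integral_cont_up) (auto simp: incseq_def intro: set_integrable_rho)
  moreover have "(\<Union>k::nat. {..real k}) = UNIV" by (auto intro: real_arch_simple)
  ultimately show ?thesis using rho_mass unfolding cdf_def by (simp add: set_lebesgue_integral_def)
qed

lemma cdf_at_bot: "(\<lambda>k::nat. cdf (- real k)) \<longlonglongrightarrow> 0"
proof -
  have "(\<lambda>k::nat. LINT y:{- real k<..}|lborel. rho y) \<longlonglongrightarrow> (LINT y:(\<Union>k. {- real k<..})|lborel. rho y)"
    by (rule set_integral_cont_up) (auto simp: incseq_def intro: set_integrable_rho)
  moreover have "(\<Union>k::nat. {- real k<..}) = UNIV"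
    by (auto simp: minus_less_iff intro: reals_Archimedean2)
  ultimately have "(\<lambda>k::nat. L - (LINT y:{- real k<..}|lborel. rho y)) \<longlonglongrightarrow> L - L"
    using rho_mass by (intro tendsto_intros) (simp add: set_lebesgue_integral_def)
  moreover have "cdf (- real k) = L - (LINT y:{- real k<..}|lborel. rho y)" for k :: nat
    using cdf_add_tail[of "- real k"] by simp
  ultimately show ?thesis by simp
qed

lemma msupp_between:
  assumes "a < b" and "cdf a < cdf b"
  shows "\<exists>c\<in>msupp rho. a \<le> c \<and> c < b"
proof -
  define S where "S = {a..b} \<inter> cdf -` {..cdf a}"
  have "closed S" unfolding S_def
    by (rule continuous_closed_preimage) (auto intro: continuous_on_subset[OF continuous_cdf])
  moreover have "a \<in> S" using assms by (simp add: S_def)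
  moreover have bdd: "bdd_above S" unfolding S_def by (rule bdd_aboveI[of _ b]) auto
  ultimately have "Sup S \<in> S" by (intro closed_contains_Sup) auto
  define c where "c = Sup S"
  have c: "a \<le> c" "c \<le> b" "cdf c \<le> cdf a" using \<open>Sup S \<in> S\<close> by (auto simp: S_def c_def)
  have "c \<in> msupp rho" unfolding msupp_def
  proof (intro CollectI allI impI)
    fix e :: real assume "e > 0"
    have "cdf a < cdf (c + e)"
    proof (cases "c + e \<le> b")
      case True
      have "c + e \<notin> S"
      proof
        assume "c + e \<in> S"
        then have "c + e \<le> c" unfolding c_def using bdd by (rule cSup_upper)
        with \<open>e > 0\<close> show False by simp
      qed
      with True c \<open>e > 0\<close> show ?thesis unfolding S_def by auto
    next
      case False
      then show ?thesis using cdf_mono[of b "c + e"] assms by simp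
    qed
    moreover have "cdf (c - e) \<le> cdf c" using \<open>e > 0\<close> by (intro cdf_mono) simp
    ultimately show "(LINT y:{c-e..c+e}|lborel. rho y) > 0"
      using c \<open>e > 0\<close> by (simp add: set_integral_Icc_eq_cdf_diff)
  qed
  moreover have "c < b" using c assms by (cases "c = b") auto
  ultimately show ?thesis using c by auto
qed

lemma msupp_nonempty: "msupp rho \<noteq> {}"
proof
  assume "msupp rho = {}"
  then have "cdf a = cdf b" if "a \<le> b" for a b
    using msupp_between[of a b] cdf_mono[OF that] that by (cases "a = b") force+
  then have "(\<lambda>k::nat. cdf (- real k)) = (\<lambda>k. cdf (real k))" by force
  then have "(\<lambda>k::nat. cdf (real k)) \<longlonglongrightarrow> 0" using cdf_at_bot by simp
  with cdf_at_top have "L = 0" using LIMSEQ_unique by blast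
  with L_pos show False by simp
qed

lemma bdd_msupp: "bdd_above (msupp rho)" "bdd_below (msupp rho)"
  using rho_cpt by (auto intro: bounded_imp_bdd_above bounded_imp_bdd_below)

lemma cdf_eq_0: assumes "x \<le> xbar_min rho" shows "cdf x = 0"
proof (rule ccontr)
  assume "cdf x \<noteq> 0"
  then have "0 < cdf x" using cdf_nonneg[of x] by simp
  from order_tendstoD(2)[OF cdf_at_bot this] obtain k :: nat where k: "cdf (- real k) < cdf x"
    by (meson eventually_sequentially order.refl)
  then have "- real k < x" using cdf_mono[of x "- real k"] by (cases "- real k < x") auto
  from msupp_between[OF this k] obtain c where "c \<in> msupp rho" "c < x" by auto
  moreover have "xbar_min rho \<le> c"
    unfolding xbar_min_def using \<open>c \<in> msupp rho\<close> bdd_msupp by (intro cInf_lower)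
  ultimately show False using assms by simp
qed

lemma cdf_eq_mass: assumes "xbar_max rho < x" shows "cdf x = L"
proof (rule ccontr)
  assume "cdf x \<noteq> L"
  then have "cdf x < L" using cdf_le_mass[of x] by simp
  from order_tendstoD(1)[OF cdf_at_top this] obtain k :: nat where k: "cdf x < cdf (real k)"
    by (meson eventually_sequentially order.refl)
  then have "x < real k" using cdf_mono[of "real k" x] by (cases "x < real k") auto
  from msupp_between[OF this k] obtain c where "c \<in> msupp rho" "x \<le> c" by auto
  moreover have "c \<le> xbar_max rho"
    unfolding xbar_max_def using \<open>c \<in> msupp rho\<close> bdd_msupp by (intro cSup_upper)
  ultimately show False using assms by simp
qed

lemma elln_pos: "0 < elln L n"
  using L_pos by (simp add: elln_def)

lemma xbar_Suc_eq_Sup: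
  "xbar rho L n (Suc i) =
     Sup {x. x < xbar rho L n i \<or> cdf x < cdf (xbar rho L n i) + elln L n}"
proof -
  have "(LINT y:{a..x}|lborel. rho y) < elln L n \<longleftrightarrow> x < a \<or> cdf x < cdf a + elln L n"
    for a x
    using elln_pos set_integral_Icc_eq_cdf_diff[of a x]
    by (cases "a \<le> x") (auto simp: set_lebesgue_integral_def)
  then show ?thesis by simp
qed

lemma cdf_xbar:
  assumes "i \<le> Nn n"
  shows "cdf (xbar rho L n i) = real i * elln L n" and "xbar rho L n i \<le> xbar_max rho"
proof -
  have "cdf (xbar rho L n i) = real i * elln L n \<and> xbar rho L n i \<le> xbar_max rho"
    using assms
  proof (induction i)
    case 0
    have "xbar_min rho \<le> xbar_max rho"
      unfolding xbar_min_def xbar_max_def using msupp_nonempty bdd_msupp by (intro cInf_le_cSup)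
    then show ?case using cdf_eq_0[of "xbar_min rho"] by simp
  next
    case (Suc i)
    let ?a = "xbar rho L n i" and ?c = "real (Suc i) * elln L n"
    have "?c \<le> real (Nn n) * elln L n"
      using Suc.prems elln_pos[of n] by (intro mult_right_mono) auto
    also have "\<dots> = L" by (simp add: Nn_def elln_def)
    finally have "?c \<le> L" .
    then have below: "x \<le> xbar_max rho" if "cdf x < ?c" for x
      using cdf_eq_mass[of x] that by force
    have "cdf ?a \<le> ?c" "?a \<le> xbar_max rho" "?c = cdf ?a + elln L n"
      using Suc elln_pos[of n] by (simp_all add: algebra_simps)
    from continuous_Sup_level(2,3)[OF continuous_cdf this(1,2) below] this(3)
    show ?case unfolding xbar_Suc_eq_Sup by auto
  qed
  then show "cdf (xbar rho L n i) = real i * elln L n" and "xbar rho L n i \<le> xbar_max rho"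
    by simp_all
qed

lemma elln_le_R_xbar_gap:
  assumes "i < Nn n"
  shows "elln L n \<le> R * (xbar rho L n (Suc i) - xbar rho L n i)"
proof -
  have cdf_gap: "cdf (xbar rho L n (Suc i)) - cdf (xbar rho L n i) = elln L n"
    using cdf_xbar(1)[of i n] cdf_xbar(1)[of "Suc i" n] assms by (simp add: algebra_simps)
  have "xbar rho L n i \<le> xbar rho L n (Suc i)"
  proof (rule ccontr)
    assume "\<not> ?thesis"
    then have "cdf (xbar rho L n (Suc i)) \<le> cdf (xbar rho L n i)" by (intro cdf_mono) simp
    with cdf_gap elln_pos[of n] show False by simp
  qed
  from cdf_diff_le[OF this] cdf_gap show ?thesis by simp
qed

lemma xbar_last_minus_first_le:
  "xbar rho L n (Nn n) - xbar rho L n 0 \<le> xbar_max rho - xbar_min rho"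
  using cdf_xbar(2)[of "Nn n" n] by simp

lemma R_pos: "0 < R"
  using elln_le_R_xbar_gap[of 0 0] elln_pos[of 0] R_nonneg
  by (cases "R = 0") (auto simp: Nn_def)

end

section \<open>The follow-the-leader system\<close>

locale ftl_system =
  fixes v v' :: "real \<Rightarrow> real" and x :: "nat \<Rightarrow> real \<Rightarrow> real" and N :: nat and l R :: real
  assumes v_deriv: "\<And>r. r \<ge> 0 \<Longrightarrow> (v has_real_derivative v' r) (at r within {0..})"
    and v_decreasing: "\<And>a b. 0 \<le> a \<Longrightarrow> a < b \<Longrightarrow> v b < v a"
    and rv'_antimono: "\<And>a b. 0 \<le> a \<Longrightarrow> a \<le> b \<Longrightarrow> b * v' b \<le> a * v' a"
    and N_pos: "N \<ge> 1" and l_pos: "l > 0" and R_pos: "R > 0"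
    and ordered: "\<And>t i. t \<ge> 0 \<Longrightarrow> i < N \<Longrightarrow> x i t < x (Suc i) t"
    and leader: "\<And>t. t \<ge> 0 \<Longrightarrow> (x N has_real_derivative v 0) (at t within {0..})"
    and follower: "\<And>t i. t \<ge> 0 \<Longrightarrow> i < N \<Longrightarrow>
          (x i has_real_derivative v (l / (x (Suc i) t - x i t))) (at t within {0..})"
    and initial_gap: "\<And>i. i < N \<Longrightarrow> l \<le> R * (x (Suc i) 0 - x i 0)"
begin

text \<open>
  Particle N is the leader, driving at speed v 0 = v_max.  The primed quantities are the time
  derivatives of the unprimed ones (see the lemmas \<open>*_deriv\<close> below).
\<close>

definition "gap i t = x (Suc i) t - x i t"
definition "y i t = l / gap i t"
definition "vel i t = (if i < N then v (y i t) else v 0)"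
definition "gap' i t = vel (Suc i) t - vel i t"
definition "gap_rate i t = gap' i t / gap i t"
definition "y' i t = - y i t * gap_rate i t"
definition "vel' i t = (if i < N then v' (y i t) * y' i t else 0)"
definition "gap'' i t = vel' (Suc i) t - vel' i t"

lemma gap_pos: "t \<ge> 0 \<Longrightarrow> i < N \<Longrightarrow> gap i t > 0"
  using ordered by (simp add: gap_def)

lemma y_pos: "t \<ge> 0 \<Longrightarrow> i < N \<Longrightarrow> y i t > 0"
  using gap_pos l_pos by (simp add: y_def)

lemma v_antimono: "0 \<le> p \<Longrightarrow> p \<le> q \<Longrightarrow> v q \<le> v p"
  using v_decreasing[of p q] by (cases "p = q") auto

lemma v'_nonpos: assumes "0 < r" shows "v' r \<le> 0"
proof (rule ccontr)
  assume "\<not> v' r \<le> 0"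
  then have "0 < v' r" by simp
  from has_real_derivative_pos_inc_right[OF v_deriv this] \<open>0 < r\<close>
  obtain e where "e > 0" and "\<And>h. h > 0 \<Longrightarrow> h < e \<Longrightarrow> v r < v (r + h)"
    by force
  then have "v r < v (r + e/2)" by simp
  moreover have "v (r + e/2) < v r" using \<open>e > 0\<close> \<open>0 < r\<close> by (intro v_decreasing) auto
  ultimately show False by simp
qed

lemma x_deriv: "t \<ge> 0 \<Longrightarrow> i \<le> N \<Longrightarrow> (x i has_real_derivative vel i t) (at t within {0..})"
  using follower leader by (cases "i = N") (auto simp: vel_def y_def gap_def)

lemma gap_deriv: "t \<ge> 0 \<Longrightarrow> i < N \<Longrightarrow> (gap i has_real_derivative gap' i t) (at t within {0..})"
  unfolding gap_def[abs_def] gap'_def by (intro DERIV_diff x_deriv) auto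

lemma v_deriv_at: "r > 0 \<Longrightarrow> (v has_real_derivative v' r) (at r)"
  using v_deriv[of r] at_within_interior[of r "{0..}"] by simp

lemma y_deriv: "t \<ge> 0 \<Longrightarrow> i < N \<Longrightarrow> (y i has_real_derivative y' i t) (at t within {0..})"
  unfolding y_def[abs_def] y'_def using gap_deriv[of t i] gap_pos[of t i]
  by (auto intro!: derivative_eq_intros simp: y_def gap_rate_def power2_eq_square field_simps)

lemma vel_deriv: "t \<ge> 0 \<Longrightarrow> i \<le> N \<Longrightarrow> (vel i has_real_derivative vel' i t) (at t within {0..})"
proof (cases "i < N")
  case True
  moreover assume "t \<ge> 0"
  ultimately have "((\<lambda>t. v (y i t)) has_real_derivative v' (y i t) * y' i t) (at t within {0..})"
    by (intro DERIV_chain2[OF v_deriv_at y_deriv] y_pos)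
  with True show ?thesis by (simp add: vel_def[abs_def] vel'_def)
qed (simp add: vel_def[abs_def] vel'_def)

lemma gap'_deriv: "t \<ge> 0 \<Longrightarrow> i < N \<Longrightarrow> (gap' i has_real_derivative gap'' i t) (at t within {0..})"
  unfolding gap'_def[abs_def] gap''_def by (intro DERIV_diff vel_deriv) auto

lemma vel_le_vel_Suc:
  assumes "t \<ge> 0" "i < N" and shorter: "Suc i < N \<Longrightarrow> gap i t \<le> gap (Suc i) t"
  shows "vel i t \<le> vel (Suc i) t"
proof (cases "Suc i < N")
  case True
  then have "y (Suc i) t \<le> y i t"
    unfolding y_def using shorter gap_pos[OF assms(1,2)] l_pos by (intro divide_left_mono) auto
  then show ?thesis using y_pos[OF \<open>t \<ge> 0\<close> True] True by (simp add: vel_def v_antimono)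
next
  case False
  then show ?thesis using y_pos[OF assms(1,2)] assms(2) by (simp add: vel_def v_antimono)
qed

lemma gap_lower_bound: assumes "t \<ge> 0" "i < N" shows "l / R \<le> gap i t"
proof -
  have "- gap i t \<le> - (l / R)"
  proof (rule max_principle[where I = "{..<N}" and a = 0 and b = t
        and f = "\<lambda>i t. - gap i t" and D = "\<lambda>i t. - gap' i t"])
    fix j :: nat and \<tau> :: real assume "j \<in> {..<N}" "0 \<le> \<tau>"
    then show "((\<lambda>t. - gap j t) has_real_derivative - gap' j \<tau>) (at \<tau> within {0..})"
      by (intro DERIV_minus gap_deriv) auto
  next
    fix j :: nat and \<tau> :: real
    assume "j \<in> {..<N}" "0 \<le> \<tau>" and "\<forall>k\<in>{..<N}. - gap k \<tau> \<le> - gap j \<tau>"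
    then show "- gap' j \<tau> \<le> 0" using vel_le_vel_Suc[of \<tau> j] by (simp add: gap'_def)
  next
    fix j assume "j \<in> {..<N}"
    then show "- gap j 0 \<le> - (l / R)"
      using initial_gap[of j] R_pos by (simp add: gap_def field_simps)
  qed (use assms in auto)
  then show ?thesis by simp
qed

lemma y_le_R: assumes "t \<ge> 0" "i < N" shows "y i t \<le> R"
  using gap_lower_bound[OF assms] gap_pos[OF assms] R_pos
  by (simp add: y_def field_simps)

lemma support_width_le: assumes "t \<ge> 0"
  shows "x N t - x 0 t \<le> (x N 0 - x 0 0) + (v 0 - v R) * t"
proof -
  have "(x N t - x 0 t) - (v 0 - v R) * t \<le> (x N 0 - x 0 0) - (v 0 - v R) * 0"
  proof (rule deriv_within_nonpos_imp_antimono[OF assms])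
    fix \<tau> :: real assume "0 \<le> \<tau>"
    then show "((\<lambda>t. (x N t - x 0 t) - (v 0 - v R) * t) has_real_derivative
        vel N \<tau> - vel 0 \<tau> - (v 0 - v R)) (at \<tau> within {0..})"
      using x_deriv[of \<tau> N] x_deriv[of \<tau> 0] by (auto intro!: derivative_eq_intros)
    show "vel N \<tau> - vel 0 \<tau> - (v 0 - v R) \<le> 0"
      using \<open>0 \<le> \<tau>\<close> y_le_R[of \<tau> 0] y_pos[of \<tau> 0] N_pos by (simp add: vel_def v_antimono)
  qed
  then show ?thesis by simp
qed

lemma gap_rate_deriv: "t \<ge> 0 \<Longrightarrow> i < N \<Longrightarrow>
    (gap_rate i has_real_derivative gap'' i t / gap i t - (gap_rate i t)\<^sup>2) (at t within {0..})"
  unfolding gap_rate_def[abs_def] using gap_deriv[of t i] gap'_deriv[of t i] gap_pos[of t i]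
  by (auto intro!: derivative_eq_intros simp: power2_eq_square field_simps)

lemma vel'_eq: "i < N \<Longrightarrow> vel' i t = - (y i t * v' (y i t)) * gap_rate i t"
  by (simp add: vel'_def y'_def)

lemma gap''_nonpos:
  assumes "j < N" "\<tau> \<ge> 0" and "gap' j \<tau> > 0"
    and rate_le: "Suc j < N \<Longrightarrow> gap_rate (Suc j) \<tau> \<le> gap_rate j \<tau>"
  shows "gap'' j \<tau> \<le> 0"
proof -
  define p where "p k = - (y k \<tau> * v' (y k \<tau>))" for k
  have p_nonneg: "0 \<le> p k" if "k < N" for k
    using mult_nonneg_nonpos[OF less_imp_le[OF y_pos] v'_nonpos[OF y_pos]] \<open>\<tau> \<ge> 0\<close> that
    by (simp add: p_def)
  have "gap_rate j \<tau> > 0"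
    using assms gap_pos[of \<tau> j] by (simp add: gap_rate_def)
  show ?thesis
  proof (cases "Suc j < N")
    case False
    then have "gap'' j \<tau> = - (p j * gap_rate j \<tau>)"
      using \<open>j < N\<close> by (simp add: gap''_def vel'_eq p_def) (simp add: vel'_def)
    then show ?thesis using p_nonneg[OF \<open>j < N\<close>] \<open>gap_rate j \<tau> > 0\<close> by simp
  next
    case True
    have "v (y j \<tau>) < v (y (Suc j) \<tau>)"
      using \<open>gap' j \<tau> > 0\<close> True by (simp add: gap'_def vel_def)
    then have "y (Suc j) \<tau> < y j \<tau>"
      using v_antimono[of "y j \<tau>" "y (Suc j) \<tau>"] y_pos[OF \<open>\<tau> \<ge> 0\<close> \<open>j < N\<close>] by force
    \<comment> \<open>the only use of (V3)\<close>
    then have "p (Suc j) \<le> p j"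
      using rv'_antimono y_pos[OF \<open>\<tau> \<ge> 0\<close> True] by (simp add: p_def)
    then have "p (Suc j) * gap_rate (Suc j) \<tau> \<le> p j * gap_rate j \<tau>"
      using rate_le[OF True] p_nonneg[OF True] \<open>gap_rate j \<tau> > 0\<close>
      by (meson mult_left_mono mult_right_mono less_imp_le order.trans)
    then show ?thesis using True \<open>j < N\<close> by (simp add: gap''_def vel'_eq p_def)
  qed
qed

lemma oleinik_gap_rate_le: assumes "t \<ge> 0" "i < N" shows "t * gap_rate i t \<le> 1"
proof (rule max_principle[where I = "{..<N}" and a = 0 and b = t
      and f = "\<lambda>i t. t * gap_rate i t"
      and D = "\<lambda>i t. t * (gap'' i t / gap i t) + gap_rate i t * (1 - t * gap_rate i t)"])
  fix j :: nat and \<tau> :: real assume "j \<in> {..<N}" "0 \<le> \<tau>"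
  with DERIV_mult[OF DERIV_ident gap_rate_deriv[of \<tau> j]]
  show "((\<lambda>t. t * gap_rate j t) has_real_derivative
      \<tau> * (gap'' j \<tau> / gap j \<tau>) + gap_rate j \<tau> * (1 - \<tau> * gap_rate j \<tau>)) (at \<tau> within {0..})"
    by (simp add: power2_eq_square algebra_simps)
next
  fix j :: nat and \<tau> :: real
  assume j: "j \<in> {..<N}" "0 \<le> \<tau>"
    and at_max: "\<forall>k\<in>{..<N}. \<tau> * gap_rate k \<tau> \<le> \<tau> * gap_rate j \<tau>"
    and "1 \<le> \<tau> * gap_rate j \<tau>"
  have "\<tau> > 0" using \<open>0 \<le> \<tau>\<close> \<open>1 \<le> \<tau> * gap_rate j \<tau>\<close> by (cases "\<tau> = 0") auto
  then have "gap_rate j \<tau> > 0"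
    using \<open>1 \<le> \<tau> * gap_rate j \<tau>\<close> by (metis zero_less_mult_pos zero_less_one less_le_trans)
  have "j < N" using j by simp
  have "gap' j \<tau> > 0"
    using \<open>gap_rate j \<tau> > 0\<close> gap_pos[OF \<open>0 \<le> \<tau>\<close> \<open>j < N\<close>]
    by (simp add: gap_rate_def zero_less_divide_iff)
  moreover have "gap_rate (Suc j) \<tau> \<le> gap_rate j \<tau>" if "Suc j < N"
    using at_max that \<open>\<tau> > 0\<close> by (simp add: mult_le_cancel_left_pos)
  ultimately have "gap'' j \<tau> \<le> 0" by (rule gap''_nonpos[OF \<open>j < N\<close> \<open>0 \<le> \<tau>\<close>])
  then have "\<tau> * (gap'' j \<tau> / gap j \<tau>) \<le> 0"
    using \<open>\<tau> > 0\<close> gap_pos[OF \<open>0 \<le> \<tau>\<close> \<open>j < N\<close>]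
    by (simp add: mult_nonneg_nonpos divide_nonpos_pos)
  moreover have "gap_rate j \<tau> * (1 - \<tau> * gap_rate j \<tau>) \<le> 0"
    using \<open>gap_rate j \<tau> > 0\<close> \<open>1 \<le> \<tau> * gap_rate j \<tau>\<close> by (simp add: mult_nonneg_nonpos)
  ultimately show "\<tau> * (gap'' j \<tau> / gap j \<tau>) + gap_rate j \<tau> * (1 - \<tau> * gap_rate j \<tau>) \<le> 0"
    by simp
qed (use assms in simp_all)

lemma sum_gap: "(\<Sum>i<N. gap i t) = x N t - x 0 t"
  unfolding gap_def by (rule sum_lessThan_telescope)

lemma sum_gap': "(\<Sum>i<N. gap' i t) = v 0 - v (y 0 t)"
  unfolding gap'_def using sum_lessThan_telescope[of "\<lambda>i. vel i t" N] N_pos by (simp add: vel_def)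

lemma sum_abs_gap'_le: assumes "t > 0"
  shows "(\<Sum>i<N. \<bar>gap' i t\<bar>) \<le> 2 * (x N 0 - x 0 0) / t + 2 * (v 0 - v R)"
proof -
  have "(\<Sum>i<N. \<bar>gap' i t\<bar>) = 2 * (\<Sum>i<N. max (gap' i t) 0) - (v 0 - v (y 0 t))"
    by (simp add: sum_gap'[symmetric] sum_distrib_left sum_subtractf[symmetric])
       (intro sum.cong; auto)
  also have "\<dots> \<le> 2 * (\<Sum>i<N. max (gap' i t) 0)"
    using v_antimono[of 0 "y 0 t"] y_pos[of t 0] N_pos \<open>t > 0\<close> by simp
  also have "\<dots> \<le> 2 * (\<Sum>i<N. gap i t / t)"
  proof -
    have "max (gap' i t) 0 \<le> gap i t / t" if "i < N" for i
      using oleinik_gap_rate_le[of t i] gap_pos[of t i] that \<open>t > 0\<close>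
      by (auto simp: gap_rate_def field_simps)
    then show ?thesis by (intro mult_left_mono sum_mono) auto
  qed
  also have "\<dots> = 2 * (x N t - x 0 t) / t" by (simp add: sum_divide_distrib[symmetric] sum_gap)
  also have "\<dots> \<le> 2 * ((x N 0 - x 0 0) + (v 0 - v R) * t) / t"
    using support_width_le[of t] \<open>t > 0\<close> by (intro divide_right_mono) auto
  also have "\<dots> = 2 * (x N 0 - x 0 0) / t + 2 * (v 0 - v R)"
    using \<open>t > 0\<close> by (simp add: field_simps)
  finally show ?thesis .
qed

lemma signed_sum_y'_le:
  assumes "t \<ge> 0" and "\<And>i. \<bar>\<sigma> i\<bar> \<le> 1"
  shows "(\<Sum>i<N. l * \<sigma> i * y' i t) \<le> R\<^sup>2 * (\<Sum>i<N. \<bar>gap' i t\<bar>)"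
proof -
  have "l * \<sigma> i * y' i t \<le> R\<^sup>2 * \<bar>gap' i t\<bar>" if "i < N" for i
  proof -
    have "l * y' i t = - (y i t)\<^sup>2 * gap' i t"
      using gap_pos[OF assms(1) that] by (simp add: y'_def y_def gap_rate_def power2_eq_square)
    have "l * \<sigma> i * y' i t = \<sigma> i * (l * y' i t)" by (simp add: ac_simps)
    also have "\<dots> = - (\<sigma> i * ((y i t)\<^sup>2 * gap' i t))" using \<open>l * y' i t = _\<close> by simp
    also have "\<dots> \<le> \<bar>\<sigma> i * ((y i t)\<^sup>2 * gap' i t)\<bar>" by (rule abs_ge_minus_self)
    also have "\<dots> = \<bar>\<sigma> i\<bar> * ((y i t)\<^sup>2 * \<bar>gap' i t\<bar>)" by (simp add: abs_mult)
    also have "\<dots> \<le> 1 * (R\<^sup>2 * \<bar>gap' i t\<bar>)"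
      using y_le_R[OF assms(1) that] y_pos[OF assms(1) that] assms(2)
      by (intro mult_mono power_mono mult_right_mono) auto
    finally show ?thesis by simp
  qed
  then show ?thesis unfolding sum_distrib_left by (intro sum_mono) simp
qed

lemma weighted_L1_y_diff_le:
  assumes "\<delta> > 0" "\<delta> \<le> s" "s \<le> t"
  shows "(\<Sum>i<N. l * \<bar>y i t - y i s\<bar>)
           \<le> R\<^sup>2 * (2 * (x N 0 - x 0 0) / \<delta> + 2 * (v 0 - v R)) * (t - s)"
proof -
  define K where "K = 2 * (x N 0 - x 0 0) / \<delta> + 2 * (v 0 - v R)"
  have "0 \<le> x N 0 - x 0 0"
    unfolding sum_gap[symmetric] using gap_pos[of 0] by (intro sum_nonneg) (simp add: less_imp_le)
  then have sum_abs_gap'_le_K: "(\<Sum>i<N. \<bar>gap' i \<tau>\<bar>) \<le> K" if "\<tau> \<ge> \<delta>" for \<tau>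
    using sum_abs_gap'_le[of \<tau>] divide_left_mono[of \<delta> \<tau> "2 * (x N 0 - x 0 0)"] that \<open>\<delta> > 0\<close>
    by (simp add: K_def)
  \<comment> \<open>With the signs frozen at the endpoints, \<open>\<Phi> t - \<Phi> s\<close> is the L1 distance.\<close>
  define \<sigma> where "\<sigma> i = sgn (y i t - y i s)" for i
  define \<Phi> where "\<Phi> \<tau> = (\<Sum>i<N. l * \<sigma> i * y i \<tau>)" for \<tau>
  have "\<Phi> t - R\<^sup>2 * K * t \<le> \<Phi> s - R\<^sup>2 * K * s"
  proof (rule deriv_within_nonpos_imp_antimono[OF \<open>s \<le> t\<close>])
    fix \<tau> assume "s \<le> \<tau>"
    then have "\<tau> \<ge> \<delta>" "\<tau> \<ge> 0" using assms by simp_all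
    have "(y i has_real_derivative y' i \<tau>) (at \<tau> within {s..})" if "i < N" for i
      using y_deriv[OF \<open>\<tau> \<ge> 0\<close> that] by (rule DERIV_subset) (use assms in auto)
    then show "((\<lambda>\<tau>. \<Phi> \<tau> - R\<^sup>2 * K * \<tau>) has_real_derivative
        (\<Sum>i<N. l * \<sigma> i * y' i \<tau>) - R\<^sup>2 * K) (at \<tau> within {s..})"
      unfolding \<Phi>_def by (auto intro!: derivative_eq_intros sum.cong simp: mult_ac)
    have "(\<Sum>i<N. l * \<sigma> i * y' i \<tau>) \<le> R\<^sup>2 * (\<Sum>i<N. \<bar>gap' i \<tau>\<bar>)"
      using \<open>\<tau> \<ge> 0\<close> by (rule signed_sum_y'_le) (simp add: \<sigma>_def abs_sgn_eq)
    also have "\<dots> \<le> R\<^sup>2 * K" using sum_abs_gap'_le_K[OF \<open>\<tau> \<ge> \<delta>\<close>] by (simp add: mult_left_mono)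
    finally show "(\<Sum>i<N. l * \<sigma> i * y' i \<tau>) - R\<^sup>2 * K \<le> 0" by simp
  qed
  moreover have "\<Phi> t - \<Phi> s = (\<Sum>i<N. l * \<bar>y i t - y i s\<bar>)"
    unfolding \<Phi>_def sum_subtractf[symmetric]
    by (intro sum.cong) (auto simp: \<sigma>_def algebra_simps sgn_mult_self_eq abs_sgn)
  ultimately show ?thesis unfolding K_def[symmetric] by (simp add: algebra_simps)
qed

lemma weighted_L1_y_diff_le_abs:
  assumes "\<delta> > 0" "\<delta> \<le> s" "\<delta> \<le> t"
  shows "(\<Sum>i<N. l * \<bar>y i t - y i s\<bar>)
           \<le> R\<^sup>2 * (2 * (x N 0 - x 0 0) / \<delta> + 2 * (v 0 - v R)) * \<bar>t - s\<bar>"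
proof (cases "s \<le> t")
  case True
  then show ?thesis using weighted_L1_y_diff_le[OF assms(1,2)] by simp
next
  case False
  then show ?thesis using weighted_L1_y_diff_le[OF assms(1,3), of s]
    by (simp add: abs_minus_commute)
qed

end

section \<open>Lagrangian step densities\<close>

lemma set_integral_abs_step_function_le:
  fixes c :: "nat \<Rightarrow> real"
  assumes "h > 0" and "A \<in> sets borel"
  shows "(LINT z:A|lborel. \<bar>\<Sum>i<N. c i * indicator {real i * h ..< real (Suc i) * h} z\<bar>)
           \<le> (\<Sum>i<N. h * \<bar>c i\<bar>)"
proof -
  define I where "I i = {real i * h ..< real (Suc i) * h}" for i
  have "real i * h \<le> real (Suc i) * h" for i using \<open>h > 0\<close> by simp
  then have measure_I: "measure lborel (I i) = h"
    and integrable_I: "integrable lborel (indicat_real (I i))" for i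
    by (simp_all add: I_def integrable_indicator_iff algebra_simps)
  define f where "f z = (\<Sum>i<N. c i * indicator (I i) z)" for z
  define g where "g z = (\<Sum>i<N. \<bar>c i\<bar> * indicator (I i) z)" for z
  have "integrable lborel f" "integrable lborel g"
    unfolding f_def[abs_def] g_def[abs_def]
    by (intro Bochner_Integration.integrable_sum integrable_mult_right integrable_I)+
  have "\<bar>f z\<bar> \<le> g z" for z
    unfolding f_def g_def by (rule order.trans[OF sum_abs]) (simp add: abs_mult)
  then have "(LINT z:A|lborel. \<bar>f z\<bar>) \<le> (LBINT z. g z)"
    unfolding set_lebesgue_integral_def using \<open>integrable lborel f\<close> \<open>integrable lborel g\<close> assms(2)
    by (intro integral_mono integrable_mult_indicator integrable_abs)
       (auto simp: indicator_def intro: order.trans[OF _ \<open>\<bar>f _\<bar> \<le> g _\<close>])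
  also have "\<dots> = (\<Sum>i<N. LBINT z. \<bar>c i\<bar> * indicator (I i) z)"
    unfolding g_def by (intro Bochner_Integration.integral_sum integrable_mult_right integrable_I)
  also have "\<dots> = (\<Sum>i<N. h * \<bar>c i\<bar>)"
    using integrable_I measure_I by (simp add: mult.commute)
  finally show ?thesis by (simp add: f_def I_def)
qed

lemma set_integral_abs_rho_check_diff_le:
  assumes "L > 0"
  shows "(LINT z:{0..L}|lborel. \<bar>rho_check L n x t z - rho_check L n x s z\<bar>)
           \<le> (\<Sum>i<Nn n. elln L n * \<bar>ydens L n x i t - ydens L n x i s\<bar>)"
proof -
  have "rho_check L n x t z - rho_check L n x s z
      = (\<Sum>i<Nn n. (ydens L n x i t - ydens L n x i s) *
           indicator {real i * elln L n ..< real (Suc i) * elln L n} z)" for z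
    by (simp only: rho_check_def left_diff_distrib sum_subtractf)
  moreover have "elln L n > 0" using assms by (simp add: elln_def)
  ultimately show ?thesis using set_integral_abs_step_function_le by simp
qed

theorem proposition3p12:
  fixes v v' :: "real \<Rightarrow> real" and rho :: "real \<Rightarrow> real" and L \<delta> :: real
    and n :: nat and x :: "nat \<Rightarrow> real \<Rightarrow> real" and t s :: real
  assumes V1_deriv: "\<And>r. r \<ge> 0 \<Longrightarrow> (v has_real_derivative v' r) (at r within {0..})"
      and V1_cont: "continuous_on {0..} v'"
      and V1_decr: "\<And>a b. 0 \<le> a \<Longrightarrow> a < b \<Longrightarrow> v b < v a"
      and V3: "\<And>a b. 0 \<le> a \<Longrightarrow> a \<le> b \<Longrightarrow> b * v' b \<le> a * v' a"
      and L_pos: "L > 0"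
      and rho_meas: "rho \<in> borel_measurable lborel"
      and rho_nonneg: "\<And>y. rho y \<ge> 0"
      and rho_int: "integrable lborel rho"
      and rho_mass: "(LINT y|lborel. rho y) = L"
      and rho_Linf: "esssup lborel (\<lambda>y. ereal \<bar>rho y\<bar>) < \<infinity>"
      and rho_cpt: "bounded (msupp rho)"
      and sol: "ftl_solution v rho L n x"
      and delta_pos: "\<delta> > 0"
      and t_ge: "t \<ge> \<delta>" and s_ge: "s \<ge> \<delta>"
  shows "(LINT z:{0..L}|lborel. \<bar>rho_check L n x t z - rho_check L n x s z\<bar>)
         \<le> (Linf_norm rho)\<^sup>2 *
             ((3 * (v 0 - v (Linf_norm rho)) + 2 * (xbar_max rho - xbar_min rho) / \<delta>)
              + (v 0 - v (Linf_norm rho))) * \<bar>t - s\<bar>"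
proof -
  interpret initial_density rho L
    using L_pos rho_nonneg rho_int rho_mass rho_Linf rho_cpt by unfold_locales
  have x_init: "\<And>i. i \<le> Nn n \<Longrightarrow> x i 0 = xbar rho L n i"
    using sol by (simp add: ftl_solution_def)
  interpret ftl_system v v' x "Nn n" "elln L n" R
    using V1_deriv V1_decr V3 sol elln_pos R_pos elln_le_R_xbar_gap x_init
    by unfold_locales (auto simp: ftl_solution_def Nn_def)
  have "(LINT z:{0..L}|lborel. \<bar>rho_check L n x t z - rho_check L n x s z\<bar>)
      \<le> (\<Sum>i<Nn n. elln L n * \<bar>y i t - y i s\<bar>)"
    using set_integral_abs_rho_check_diff_le[OF L_pos] by (simp add: ydens_def y_def gap_def)
  also have "\<dots> \<le> R\<^sup>2 * (2 * (x (Nn n) 0 - x 0 0) / \<delta> + 2 * (v 0 - v R)) * \<bar>t - s\<bar>"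
    by (rule weighted_L1_y_diff_le_abs[OF delta_pos s_ge t_ge])
  also have "\<dots> \<le> R\<^sup>2 * ((3 * (v 0 - v R) + 2 * (xbar_max rho - xbar_min rho) / \<delta>)
      + (v 0 - v R)) * \<bar>t - s\<bar>"
  proof -
    have "2 * (x (Nn n) 0 - x 0 0) / \<delta> \<le> 2 * (xbar_max rho - xbar_min rho) / \<delta>"
      using xbar_last_minus_first_le[of n] x_init[of 0] x_init[of "Nn n"] delta_pos
      by (simp add: divide_right_mono)
    with v_antimono[OF order_refl R_nonneg] show ?thesis
      by (intro mult_right_mono mult_left_mono) auto
  qed
  finally show ?thesis .
qed

end
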